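(* Let $q=3^m$ with $m\ge 4$. Then for every $i\in\{0,1,2\}$ there exists $x\in C_1$ such that $x^3-x=b^2$ for some $b\in\mathbb{F}_q^*$ with $\mathrm{Tr}_{\mathbb{F}_q/\mathbb{F}_3}(b)=i$.
   Context: $C_1$ denotes the set of non-squares in $\mathbb{F}_q^*$; $\mathrm{Tr}_{\mathbb{F}_q/\mathbb{F}_3}$ is the absolute trace. *)

theory Defs
  imports Main
begin

text \<open>Non-squares of the multiplicative group of a field (the set C_1).\<close>
definition nonsquares :: "'a::field set" where
  "nonsquares = {x. x \<noteq> 0 \<and> \<not> (\<exists>y. y ^ 2 = x)}"

definition abs_trace3 :: "nat \<Rightarrow> 'a::field \<Rightarrow> 'a" where
  "abs_trace3 m b = (\<Sum>k<m. b ^ (3 ^ k))"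

end

(* Let chi be the quadratic character of F_q and psi = omega^Tr its canonical additive character.
   Give each solution (x, b) of x^3 - x = b^2 with Tr b = i the weight 1 - chi x.  If no nonsquare
   x comes with some b <> 0, only the solutions with b = 0 (and x in F_3) have nonzero weight, so
   the total weight is at most 3.  Detecting the equation and the trace condition by additive
   characters instead expresses 3 times the total weight as q + G B_i + 1 + chi(-1) - c_i (K - chi(-1)),
   where G is the quadratic Gauss sum, |G| = sqrt q, |B_i| <= 6, |c_i| <= 2 and K is a Kloosterman
   sum, for which the fourth moment gives |K|^4 <= 2 q^3.  For q >= 81 the term q dominates. *)

theory Submission
  imports Defs "HOL-Library.Cardinality" "HOL-Computational_Algebra.Polynomial" Complex_Main
begin

section \<open>Finite fields and the quadratic character\<close>

lemma of_nat_card_UNIV_eq_0: "of_nat CARD('a) = (0::'a::{finite,ring_1})"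
proof -
  have "(\<Sum>x::'a\<in>UNIV. x + 1) = (\<Sum>x\<in>UNIV. x)"
    by (rule sum.reindex_bij_witness[of _ "\<lambda>x. x - 1" "\<lambda>x. x + 1"]) auto
  then show ?thesis
    by (simp add: sum.distrib)
qed

lemma power_card_UNIV_minus_one:
  assumes "(a::'a::{finite,field}) \<noteq> 0"
  shows "a ^ (CARD('a) - 1) = 1"
proof -
  have "(\<Prod>x\<in>-{0}. a * x) = (\<Prod>x\<in>-{0::'a}. x)"
    by (rule prod.reindex_bij_witness[of _ "\<lambda>x. x / a" "\<lambda>x. a * x"]) (use assms in auto)
  moreover have "card (-{0::'a}) = CARD('a) - 1"
    by (simp add: Compl_eq_Diff_UNIV card_Diff_singleton)
  ultimately show ?thesis
    by (simp add: prod.distrib)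
qed

lemma power_card_UNIV: "x ^ CARD('a) = (x::'a::{finite,field})"
proof (cases "x = 0")
  case False
  then have "x ^ CARD('a) = x * x ^ (CARD('a) - 1)"
    by (simp flip: power_Suc)
  with power_card_UNIV_minus_one[OF False] show ?thesis
    by simp
qed simp

lemma card_roots_power_eq_le:
  assumes "n > 0"
  shows "card {x::'a::idom. x ^ n = c} \<le> n"
proof -
  have "coeff (monom 1 n - [:c:]) n = 1"
    using assms by (simp add: coeff_pCons split: nat.split)
  then have "monom 1 n - [:c:] \<noteq> 0"
    by (metis coeff_0 zero_neq_one)
  moreover have "degree (monom 1 n - [:c:]) \<le> n"
    by (rule order.trans[OF degree_diff_le_max]) (simp add: degree_monom_le)
  ultimately show ?thesis
    using card_poly_roots_bound[of "monom 1 n - [:c:]"] by (simp add: poly_monom)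
qed

definition quad_char :: "'a::field \<Rightarrow> complex" where
  "quad_char x = (if x = 0 then 0 else if \<exists>y. y ^ 2 = x then 1 else -1)"

definition nonzero_squares :: "'a::field set" where
  "nonzero_squares = {x. x \<noteq> 0 \<and> (\<exists>y. y ^ 2 = x)}"

lemma card_square_roots:
  assumes "(2::'a::field) \<noteq> 0"
  shows "card {b::'a. b ^ 2 = y} = (if y = 0 then 1 else if \<exists>b. b ^ 2 = y then 2 else 0)"
proof (cases "\<exists>b. b ^ 2 = y")
  case True
  then obtain b where b: "b ^ 2 = y"
    by blast
  show ?thesis
  proof (cases "y = 0")
    case False
    then have "b \<noteq> - b"
      using b assms by (auto simp: eq_neg_iff_add_eq_0 simp flip: mult_2)
    moreover have "{b. b ^ 2 = y} = {b, - b}"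
      using b by (auto simp: power2_eq_iff)
    ultimately show ?thesis
      using False True by simp
  qed simp
qed auto

lemma sum_comp_square:
  assumes "(2::'a::{finite,field}) \<noteq> 0"
  shows "(\<Sum>b\<in>UNIV. f ((b::'a) ^ 2)) = (\<Sum>y\<in>UNIV. (1 + quad_char y) * f y)"
proof -
  have "(\<Sum>b\<in>UNIV. f ((b::'a) ^ 2)) = (\<Sum>y\<in>UNIV. \<Sum>b\<in>{b. b \<in> UNIV \<and> b ^ 2 = y}. f (b ^ 2))"
    by (rule sum.group[symmetric]) auto
  also have "\<dots> = (\<Sum>y\<in>UNIV. of_nat (card {b::'a. b ^ 2 = y}) * f y)"
    by (rule sum.cong) auto
  also have "\<dots> = (\<Sum>y\<in>UNIV. (1 + quad_char y) * f y)"
    by (rule sum.cong) (simp_all add: card_square_roots[OF assms] quad_char_def)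
  finally show ?thesis .
qed

lemma sum_quad_char:
  assumes "(2::'a::{finite,field}) \<noteq> 0"
  shows "(\<Sum>x\<in>UNIV. quad_char (x::'a)) = 0"
  using sum_comp_square[OF assms, of "\<lambda>_. 1"] by (simp add: sum.distrib)

lemma card_nonzero_squares:
  assumes "(2::'a::{finite,field}) \<noteq> 0"
  shows "2 * card (nonzero_squares::'a set) = CARD('a) - 1"
proof -
  have "card (-{0::'a}) = (\<Sum>y\<in>-{0}. card {b. b \<in> -{0::'a} \<and> b ^ 2 = y})"
    using sum.group[of "-{0::'a}" "-{0}" "\<lambda>b. b ^ 2" "\<lambda>_. 1::nat"] by (simp add: image_iff)
  also have "\<dots> = (\<Sum>y\<in>-{0::'a}. if y \<in> nonzero_squares then 2 else 0)"
  proof (rule sum.cong)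
    fix y :: 'a
    assume "y \<in> -{0}"
    then have "{b. b \<in> -{0} \<and> b ^ 2 = y} = {b. b ^ 2 = y}"
      by auto
    with \<open>y \<in> -{0}\<close> show "card {b. b \<in> -{0} \<and> b ^ 2 = y} = (if y \<in> nonzero_squares then 2 else 0)"
      by (simp add: card_square_roots[OF assms] nonzero_squares_def)
  qed simp
  also have "\<dots> = 2 * card (nonzero_squares::'a set)"
    by (simp add: sum.If_cases nonzero_squares_def Int_def)
  finally show ?thesis
    by (simp add: Compl_eq_Diff_UNIV card_Diff_singleton)
qed

lemma two_mult_half_card_minus_one:
  assumes "(2::'a::{finite,field}) \<noteq> 0"
  shows "2 * ((CARD('a) - 1) div 2) = CARD('a) - 1"
  using card_nonzero_squares[OF assms] by presburger

lemma power_half_card_of_square: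
  assumes "(2::'a::{finite,field}) \<noteq> 0" "(b::'a) \<noteq> 0"
  shows "(b ^ 2) ^ ((CARD('a) - 1) div 2) = 1"
proof -
  have "2 * ((CARD('a) - 1) div 2) = CARD('a) - 1"
    by (rule two_mult_half_card_minus_one[OF assms(1)])
  then show ?thesis
    using power_card_UNIV_minus_one[OF assms(2)] by (simp flip: power_mult)
qed

theorem euler_criterion:
  assumes "(2::'a::{finite,field}) \<noteq> 0" "(y::'a) \<noteq> 0"
  shows "(\<exists>b. b ^ 2 = y) \<longleftrightarrow> y ^ ((CARD('a) - 1) div 2) = 1"
proof
  assume "\<exists>b. b ^ 2 = y"
  then show "y ^ ((CARD('a) - 1) div 2) = 1"
    using power_half_card_of_square[OF assms(1)] assms(2) by fastforce
next
  define n where "n = (CARD('a) - 1) div 2"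
  have sub: "nonzero_squares \<subseteq> {x::'a. x ^ n = 1}"
    using power_half_card_of_square[OF assms(1)] by (auto simp: nonzero_squares_def n_def)
  have "card (nonzero_squares::'a set) = n"
    using card_nonzero_squares[OF assms(1)] by (simp add: n_def)
  moreover have "(1::'a) \<in> nonzero_squares"
    by (auto simp: nonzero_squares_def intro: exI[of _ 1])
  ultimately have "n > 0"
    by (metis card_gt_0_iff empty_iff finite)
  then have "card {x::'a. x ^ n = 1} \<le> card (nonzero_squares::'a set)"
    using card_roots_power_eq_le \<open>card nonzero_squares = n\<close> by metis
  moreover have "card (nonzero_squares::'a set) \<le> card {x::'a. x ^ n = 1}"
    using sub by (intro card_mono) auto
  ultimately have "nonzero_squares = {x::'a. x ^ n = 1}"
    using sub by (intro card_subset_eq) auto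
  moreover assume "y ^ ((CARD('a) - 1) div 2) = 1"
  ultimately show "\<exists>b. b ^ 2 = y"
    by (auto simp: nonzero_squares_def n_def)
qed

lemma power_half_card_cases:
  assumes "(2::'a::{finite,field}) \<noteq> 0" "(y::'a) \<noteq> 0"
  shows "y ^ ((CARD('a) - 1) div 2) = 1 \<or> y ^ ((CARD('a) - 1) div 2) = -1"
proof -
  have "2 * ((CARD('a) - 1) div 2) = CARD('a) - 1"
    by (rule two_mult_half_card_minus_one[OF assms(1)])
  then have "(y ^ ((CARD('a) - 1) div 2)) ^ 2 = 1"
    using power_card_UNIV_minus_one[OF assms(2)] by (simp flip: power_mult add: mult.commute)
  then show ?thesis
    by (simp add: power2_eq_1_iff)
qed

lemma quad_char_eq_power_half_card:
  assumes "(2::'a::{finite,field}) \<noteq> 0" "(y::'a) \<noteq> 0"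
  shows "quad_char y = (if y ^ ((CARD('a) - 1) div 2) = 1 then 1 else -1)"
  using euler_criterion[OF assms] assms(2) by (simp add: quad_char_def)

lemma quad_char_mult:
  assumes "(2::'a::{finite,field}) \<noteq> 0"
  shows "quad_char ((x::'a) * y) = quad_char x * quad_char y"
proof (cases "x = 0 \<or> y = 0")
  case False
  have "(1::'a) \<noteq> -1"
    using assms by (metis one_add_one add_eq_0_iff2)
  then show ?thesis
    using False power_half_card_cases[OF assms, of x] power_half_card_cases[OF assms, of y]
    by (auto simp: quad_char_eq_power_half_card[OF assms] power_mult_distrib)
qed (auto simp: quad_char_def)

lemma minus_one_is_square:
  assumes "(2::'a::{finite,field}) \<noteq> 0" "4 dvd CARD('a) - 1"
  shows "\<exists>b::'a. b ^ 2 = -1"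
proof -
  have "even ((CARD('a) - 1) div 2)"
    using assms(2) by (auto simp: dvd_def)
  then show ?thesis
    using euler_criterion[OF assms(1), of "-1"] by simp
qed

lemma quad_char_0 [simp]: "quad_char 0 = 0"
  by (simp add: quad_char_def)

lemma quad_char_1 [simp]: "quad_char 1 = 1"
  by (auto simp: quad_char_def intro: exI[of _ 1])

lemma quad_char_square_mult:
  assumes "(2::'a::{finite,field}) \<noteq> 0" "(c::'a) \<noteq> 0"
  shows "quad_char (c ^ 2 * y) = quad_char y"
proof -
  have "quad_char (c ^ 2) = 1"
    using assms(2) by (auto simp: quad_char_def)
  then show ?thesis
    by (simp add: quad_char_mult[OF assms(1)])
qed

lemma quad_char_times_self:
  assumes "(x::'a::field) \<noteq> 0"
  shows "quad_char x * quad_char x = 1"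
  using assms by (simp add: quad_char_def)

lemma cnj_quad_char [simp]: "cnj (quad_char x) = quad_char x"
  by (simp add: quad_char_def)

lemma norm_quad_char_le: "norm (quad_char x) \<le> 1"
  by (simp add: quad_char_def)

lemma quad_char_eq_minus_one_iff: "quad_char x = -1 \<longleftrightarrow> x \<in> nonsquares"
  by (auto simp: quad_char_def nonsquares_def)

section \<open>Additive characters, Gauss sums and Kloosterman sums\<close>

lemma equal_sum_and_reciprocal_sum_cases:
  fixes w1 z1 w2 z2 :: "'a::field"
  assumes nonzero: "w1 \<noteq> 0" "z1 \<noteq> 0" "w2 \<noteq> 0" "z2 \<noteq> 0"
    and sums: "w1 + z1 = w2 + z2" "1 / w1 + 1 / z1 = 1 / w2 + 1 / z2"
  shows "w2 = w1 \<and> z2 = z1 \<or> w2 = z1 \<and> z2 = w1 \<or> z1 = - w1 \<and> z2 = - w2"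
proof (cases "w1 + z1 = 0")
  case True
  then show ?thesis
    using sums(1) by (simp add: eq_neg_iff_add_eq_0 add.commute)
next
  case False
  have "(w1 + z1) * (w2 * z2) = (w2 + z2) * (w1 * z1)"
    using sums(2) nonzero by (simp add: field_simps)
  then have "w1 * z1 = w2 * z2"
    using False sums(1) by simp
  \<comment> \<open>so \<open>w2\<close> is a root of \<open>(X - w1) (X - z1) = X\<^sup>2 - (w1 + z1) X + w1 z1\<close>\<close>
  have "(w2 - w1) * (w2 - z1) = w2 * w2 - w2 * (w1 + z1) + w1 * z1"
    by (simp add: algebra_simps)
  also have "\<dots> = 0"
    using sums(1) \<open>w1 * z1 = w2 * z2\<close> by (simp add: algebra_simps)
  finally show ?thesis
    using sums(1) by auto
qed

lemma card_equal_sum_and_reciprocal_sum: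
  fixes N :: "('a::{finite,field} \<times> 'a) set"
  defines "N \<equiv> (-{0}) \<times> (-{0})"
  shows "card {(p, p') \<in> N \<times> N.
      fst p + snd p = fst p' + snd p' \<and> 1 / fst p + 1 / snd p = 1 / fst p' + 1 / snd p'}
    \<le> 3 * (CARD('a) - 1) ^ 2"
  (is "card ?C \<le> _")
proof -
  have "?C \<subseteq> (\<lambda>p. (p, p)) ` N \<union> (\<lambda>p. (p, prod.swap p)) ` N
      \<union> (\<lambda>(w, z). ((w, - w), (z, - z))) ` N"
  proof
    fix pp
    assume "pp \<in> ?C"
    obtain w1 z1 w2 z2 :: 'a where pp: "pp = ((w1, z1), (w2, z2))"
      by (metis prod.exhaust)
    have "w1 \<noteq> 0" "z1 \<noteq> 0" "w2 \<noteq> 0" "z2 \<noteq> 0"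
      and "w1 + z1 = w2 + z2" "1 / w1 + 1 / z1 = 1 / w2 + 1 / z2"
      using \<open>pp \<in> ?C\<close> by (auto simp: pp N_def)
    then show "pp \<in> (\<lambda>p. (p, p)) ` N \<union> (\<lambda>p. (p, prod.swap p)) ` N
        \<union> (\<lambda>(w, z). ((w, - w), (z, - z))) ` N"
      using equal_sum_and_reciprocal_sum_cases[of w1 z1 w2 z2] by (auto simp: pp N_def image_iff)
  qed
  then have "card ?C \<le> card ((\<lambda>p. (p, p)) ` N \<union> (\<lambda>p. (p, prod.swap p)) ` N
      \<union> (\<lambda>(w, z). ((w, - w), (z, - z))) ` N)"
    by (intro card_mono) auto
  also have "\<dots> \<le> card N + card N + card N"
    by (intro order.trans[OF card_Un_le] add_mono card_image_le) auto
  also have "card N = (CARD('a) - 1) ^ 2"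
    by (simp add: N_def card_cartesian_product Compl_eq_Diff_UNIV card_Diff_singleton power2_eq_square)
  finally show ?thesis
    by simp
qed

locale additive_character =
  fixes psi :: "'a::{finite,field} \<Rightarrow> complex" (\<open>\<psi>\<close>)
  assumes psi_add: "\<psi> (x + y) = \<psi> x * \<psi> y"
    and psi_0 [simp]: "\<psi> 0 = 1"
    and psi_nontrivial: "\<exists>x. \<psi> x \<noteq> 1"
begin

lemma psi_of_nat_mult: "\<psi> (of_nat n * x) = \<psi> x ^ n"
  by (induction n) (simp_all add: distrib_right psi_add)

lemma norm_psi [simp]: "norm (\<psi> x) = 1"
proof -
  have "\<psi> x ^ CARD('a) = 1"
    using psi_of_nat_mult[of "CARD('a)" x] by (simp add: of_nat_card_UNIV_eq_0)
  then show ?thesis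
    using power_eq_1_iff by fastforce
qed

lemma psi_nonzero [simp]: "\<psi> x \<noteq> 0"
  using norm_psi[of x] by (metis norm_zero zero_neq_one)

lemma psi_minus: "\<psi> (- x) = cnj (\<psi> x)"
proof -
  have "\<psi> (- x) * \<psi> x = 1"
    by (simp flip: psi_add)
  moreover have "cnj (\<psi> x) * \<psi> x = 1"
    using complex_norm_square[of "\<psi> x"] by (simp add: mult.commute)
  ultimately show ?thesis
    by (metis mult_cancel_right psi_nonzero)
qed

lemma psi_diff: "\<psi> (x - y) = \<psi> x * cnj (\<psi> y)"
  using psi_add[of x "- y"] by (simp add: psi_minus)

lemma sum_psi_mult: "(\<Sum>x\<in>UNIV. \<psi> (l * x)) = (if l = 0 then of_nat CARD('a) else 0)"
proof (cases "l = 0")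
  case False
  obtain x0 where x0: "\<psi> x0 \<noteq> 1"
    using psi_nontrivial by blast
  have "(\<Sum>x\<in>UNIV. \<psi> (l * x)) = (\<Sum>x\<in>UNIV. \<psi> (l * (x + x0 / l)))"
    by (rule sum.reindex_bij_witness[of _ "\<lambda>x. x + x0 / l" "\<lambda>x. x - x0 / l"]) auto
  also have "\<dots> = (\<Sum>x\<in>UNIV. \<psi> (l * x)) * \<psi> x0"
    using False by (simp add: distrib_left psi_add sum_distrib_right)
  finally have "(\<Sum>x\<in>UNIV. \<psi> (l * x)) * (1 - \<psi> x0) = 0"
    by (simp add: algebra_simps)
  with x0 False show ?thesis
    by simp
qed simp

lemma sum_psi_mult_nonzero:
  "(\<Sum>x\<in>-{0}. \<psi> (l * x)) = (if l = 0 then of_nat CARD('a) - 1 else -1)"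
proof -
  have "(\<Sum>x\<in>UNIV. \<psi> (l * x)) = 1 + (\<Sum>x\<in>-{0}. \<psi> (l * x))"
    using sum.remove[of UNIV 0 "\<lambda>x. \<psi> (l * x)"] by (simp add: Compl_eq_Diff_UNIV)
  then show ?thesis
    by (auto simp: sum_psi_mult eq_diff_eq' add_eq_0_iff2 minus_equation_iff[of _ 1] split: if_splits)
qed

lemma indicator_eq_sum_psi:
  "of_bool (y = z) = (\<Sum>a\<in>UNIV. \<psi> (a * (y - z))) / of_nat CARD('a)"
  using sum_psi_mult[of "y - z"] by (simp add: mult.commute)

lemma sum_fiber_eq_fourier:
  "(\<Sum>x\<in>A. \<Sum>b\<in>B. if f x = h b then g x * w b else 0)
     = (\<Sum>a\<in>UNIV. (\<Sum>x\<in>A. g x * \<psi> (a * f x)) * (\<Sum>b\<in>B. w b * \<psi> (- (a * h b))))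
         / of_nat CARD('a)"
proof -
  have "(if f x = h b then g x * w b else 0)
      = (\<Sum>a\<in>UNIV. g x * \<psi> (a * f x) * (w b * \<psi> (- (a * h b)))) / of_nat CARD('a)" for x b
  proof -
    have "(if f x = h b then g x * w b else 0) = g x * w b * of_bool (f x = h b)"
      by simp
    also have "\<dots> = g x * w b * ((\<Sum>a\<in>UNIV. \<psi> (a * f x) * \<psi> (- (a * h b))) / of_nat CARD('a))"
      by (simp add: indicator_eq_sum_psi right_diff_distrib psi_add[symmetric])
    finally show ?thesis
      by (simp add: sum_distrib_left mult_ac)
  qed
  then have "(\<Sum>x\<in>A. \<Sum>b\<in>B. if f x = h b then g x * w b else 0)
      = (\<Sum>x\<in>A. \<Sum>b\<in>B. \<Sum>a\<in>UNIV. g x * \<psi> (a * f x) * (w b * \<psi> (- (a * h b)))) / of_nat CARD('a)"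
    by (simp add: sum_divide_distrib)
  also have "\<dots> = (\<Sum>a\<in>UNIV. \<Sum>x\<in>A. \<Sum>b\<in>B. g x * \<psi> (a * f x) * (w b * \<psi> (- (a * h b))))
                     / of_nat CARD('a)"
    by (subst sum.swap, subst (2) sum.swap) (simp add: sum.swap[of _ B])
  finally show ?thesis
    by (simp add: sum_product)
qed

definition kloosterman :: "'a \<Rightarrow> 'a \<Rightarrow> complex" where
  "kloosterman a b = (\<Sum>w\<in>-{0}. \<psi> (a * w + b / w))"

lemma kloosterman_eq_kloosterman_1:
  assumes "a \<noteq> 0"
  shows "kloosterman a b = kloosterman 1 (a * b)"
  unfolding kloosterman_def
  by (rule sum.reindex_bij_witness[of _ "\<lambda>u. u / a" "\<lambda>w. a * w"]) (use assms in auto)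

lemma kloosterman_zero_right: "kloosterman a 0 = (if a = 0 then of_nat CARD('a) - 1 else -1)"
  using sum_psi_mult_nonzero[of a] by (simp add: kloosterman_def)

lemma sum_norm_sum_psi_squared:
  assumes "finite T"
  shows "(\<Sum>a\<in>UNIV. \<Sum>b\<in>UNIV. norm (\<Sum>p\<in>T. \<psi> (a * \<sigma> p + b * \<tau> p)) ^ 2)
    = real CARD('a) ^ 2 * real (card {(p, p') \<in> T \<times> T. \<sigma> p = \<sigma> p' \<and> \<tau> p = \<tau> p'})"
    (is "?L = real CARD('a) ^ 2 * real (card ?C)")
proof -
  let ?q = "of_nat CARD('a) :: complex"
  let ?F = "\<lambda>a b (p, p'). \<psi> ((\<sigma> p - \<sigma> p') * a) * \<psi> ((\<tau> p - \<tau> p') * b)"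
  have "complex_of_real (norm (\<Sum>p\<in>T. \<psi> (a * \<sigma> p + b * \<tau> p)) ^ 2) = (\<Sum>pp\<in>T \<times> T. ?F a b pp)"
    for a b
    unfolding complex_norm_square cnj_sum sum_product sum.cartesian_product
    by (intro sum.cong refl) (auto simp: psi_diff[symmetric] psi_add[symmetric] algebra_simps)
  then have "complex_of_real ?L = (\<Sum>a\<in>UNIV. \<Sum>b\<in>UNIV. \<Sum>pp\<in>T \<times> T. ?F a b pp)"
    by (simp only: of_real_sum)
  also have "\<dots> = (\<Sum>pp\<in>T \<times> T. \<Sum>a\<in>UNIV. \<Sum>b\<in>UNIV. ?F a b pp)"
    by (simp only: sum.swap[of _ UNIV "T \<times> T"])
  also have "\<dots> = (\<Sum>pp\<in>T \<times> T. ?q ^ 2 * of_bool (pp \<in> ?C))"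
    by (intro sum.cong refl)
      (auto simp: sum_product[symmetric] sum_psi_mult power2_eq_square split: if_splits)
  also have "\<dots> = ?q ^ 2 * of_nat (card ?C)"
  proof -
    have "(T \<times> T) \<inter> {pp. pp \<in> ?C} = ?C"
      by auto
    then show ?thesis
      using assms by (simp add: sum_distrib_left[symmetric])
  qed
  finally have "complex_of_real ?L = complex_of_real (real CARD('a) ^ 2 * real (card ?C))"
    by (simp only: of_real_mult of_real_power of_real_of_nat_eq)
  then show ?thesis
    by (simp only: of_real_eq_iff)
qed

lemma kloosterman_square:
  "kloosterman a b ^ 2
     = (\<Sum>p\<in>(-{0}) \<times> (-{0}). \<psi> (a * (fst p + snd p) + b * (1 / fst p + 1 / snd p)))"
  unfolding kloosterman_def power2_eq_square sum_product sum.cartesian_product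
  by (intro sum.cong refl) (auto simp: psi_add[symmetric] distrib_left add_divide_distrib ac_simps)

lemma sum_norm_kloosterman_fourth_power_le:
  "(\<Sum>a\<in>UNIV. \<Sum>b\<in>UNIV. norm (kloosterman a b) ^ 4)
     \<le> real CARD('a) ^ 2 * (3 * (real CARD('a) - 1) ^ 2)"
proof -
  let ?C = "{(p, p') \<in> ((-{0::'a}) \<times> (-{0::'a})) \<times> ((-{0::'a}) \<times> (-{0::'a})).
      fst p + snd p = fst p' + snd p' \<and> 1 / fst p + 1 / snd p = 1 / fst p' + 1 / snd p'}"
  have "norm (kloosterman a b) ^ 4 = norm (kloosterman a b ^ 2) ^ 2" for a b
    unfolding norm_power by (simp flip: power_mult)
  then have "(\<Sum>a\<in>UNIV. \<Sum>b\<in>UNIV. norm (kloosterman a b) ^ 4)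
      = (\<Sum>a\<in>UNIV. \<Sum>b\<in>UNIV. norm (\<Sum>p\<in>(-{0}) \<times> (-{0}).
           \<psi> (a * (fst p + snd p) + b * (1 / fst p + 1 / snd p))) ^ 2)"
    by (simp only: kloosterman_square)
  also have "\<dots> = real CARD('a) ^ 2 * real (card ?C)"
    unfolding sum_norm_sum_psi_squared[OF finite] ..
  also have "\<dots> \<le> real CARD('a) ^ 2 * (3 * (real CARD('a) - 1) ^ 2)"
  proof (rule mult_left_mono)
    have "real (card ?C) \<le> real (3 * (CARD('a) - 1) ^ 2)"
      using card_equal_sum_and_reciprocal_sum[where 'a='a] by (simp only: of_nat_le_iff)
    then show "real (card ?C) \<le> 3 * (real CARD('a) - 1) ^ 2"
      by (simp add: of_nat_diff)
  qed simp
  finally show ?thesis .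
qed

lemma sum_norm_kloosterman_hyperbola:
  "(\<Sum>a\<in>UNIV. norm (kloosterman a (b / a)) ^ 4)
     = (real CARD('a) - 1) ^ 4 + (real CARD('a) - 1) * norm (kloosterman 1 b) ^ 4"
proof -
  have "(\<Sum>a\<in>-{0}. norm (kloosterman a (b / a)) ^ 4) = (\<Sum>a\<in>-{0::'a}. norm (kloosterman 1 b) ^ 4)"
  proof (rule sum.cong)
    fix a :: 'a
    assume "a \<in> -{0}"
    then show "norm (kloosterman a (b / a)) ^ 4 = norm (kloosterman 1 b) ^ 4"
      using kloosterman_eq_kloosterman_1[of a "b / a"] by simp
  qed simp
  also have "\<dots> = (real CARD('a) - 1) * norm (kloosterman 1 b) ^ 4"
    by (simp add: Compl_eq_Diff_UNIV card_Diff_singleton of_nat_diff)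
  finally have "(\<Sum>a\<in>-{0}. norm (kloosterman a (b / a)) ^ 4) = \<dots>" .
  moreover have "kloosterman 0 (b / 0) = of_nat (CARD('a) - 1)"
    by (simp add: kloosterman_zero_right of_nat_diff)
  then have "norm (kloosterman 0 (b / 0)) = real CARD('a) - 1"
    by (simp only: norm_of_nat) (simp add: of_nat_diff)
  ultimately show ?thesis
    using sum.remove[of UNIV 0 "\<lambda>a. norm (kloosterman a (b / a)) ^ 4"]
    by (simp add: Compl_eq_Diff_UNIV)
qed

theorem norm_kloosterman_bound: "norm (kloosterman 1 b) ^ 4 \<le> 2 * real CARD('a) ^ 3"
proof -
  define n where "n = real CARD('a)"
  define k where "k = norm (kloosterman 1 b) ^ 4"
  have "CARD('a) \<ge> 2"
    using card_mono[of UNIV "{0::'a, 1}"] by simp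
  then have "n \<ge> 2"
    by (simp add: n_def)
  \<comment> \<open>the pairs \<open>(a, b / a)\<close> alone already contribute \<open>(n - 1) k\<close> to the fourth moment\<close>
  have "(n - 1) ^ 4 + (n - 1) * k \<le> n ^ 2 * (3 * (n - 1) ^ 2)"
    using sum_norm_kloosterman_hyperbola[of b] sum_norm_kloosterman_fourth_power_le
      sum_mono[of UNIV "\<lambda>a. norm (kloosterman a (b / a)) ^ 4" "\<lambda>a. \<Sum>c\<in>UNIV. norm (kloosterman a c) ^ 4"]
      member_le_sum[of _ UNIV "\<lambda>c. norm (kloosterman _ c) ^ 4"]
    by (simp add: n_def k_def)
  then have "(n - 1) * ((n - 1) ^ 3 + k) \<le> (n - 1) * (3 * n ^ 2 * (n - 1))"
    by (simp add: algebra_simps power2_eq_square power3_eq_cube power4_eq_xxxx)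
  then have "(n - 1) ^ 3 + k \<le> 3 * n ^ 2 * (n - 1)"
    using \<open>n \<ge> 2\<close> by (simp add: mult_le_cancel_left_pos)
  then have "k \<le> 2 * n ^ 3 - 3 * n + 1"
    by (simp add: algebra_simps power2_eq_square power3_eq_cube)
  then show ?thesis
    using \<open>n \<ge> 2\<close> by (simp add: k_def n_def)
qed

end

locale odd_additive_character = additive_character psi
  for psi :: "'a::{finite,field} \<Rightarrow> complex" (\<open>\<psi>\<close>) +
  assumes two_neq_zero: "(2::'a) \<noteq> 0"
begin

definition gauss_sum :: complex where
  "gauss_sum = (\<Sum>x\<in>UNIV. quad_char x * \<psi> x)"

lemma sum_quad_char_psi_mult: "(\<Sum>x\<in>UNIV. quad_char x * \<psi> (l * x)) = quad_char l * gauss_sum"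
proof (cases "l = 0")
  case True
  then show ?thesis
    using sum_quad_char[OF two_neq_zero] by (simp add: quad_char_def)
next
  case False
  have "(\<Sum>x\<in>UNIV. quad_char x * \<psi> (l * x)) = (\<Sum>y\<in>UNIV. quad_char (y / l) * \<psi> y)"
    by (rule sum.reindex_bij_witness[of _ "\<lambda>y. y / l" "\<lambda>x. l * x"]) (use False in auto)
  also have "\<dots> = (\<Sum>y\<in>UNIV. quad_char l * (quad_char y * \<psi> y))"
  proof (rule sum.cong)
    fix y
    have "quad_char (y / l) * quad_char l = quad_char y"
      using False by (simp add: quad_char_mult[OF two_neq_zero, symmetric])
    then show "quad_char (y / l) * \<psi> y = quad_char l * (quad_char y * \<psi> y)"
      using False quad_char_times_self[of l]
      by (metis (no_types, lifting) mult.assoc mult.commute mult_1_right)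
  qed simp
  finally show ?thesis
    by (simp add: gauss_sum_def sum_distrib_left)
qed

lemma sum_psi_mult_square:
  assumes "a \<noteq> 0"
  shows "(\<Sum>b\<in>UNIV. \<psi> (a * b ^ 2)) = quad_char a * gauss_sum"
proof -
  have "(\<Sum>b\<in>UNIV. \<psi> (a * b ^ 2)) = (\<Sum>y\<in>UNIV. (1 + quad_char y) * \<psi> (a * y))"
    by (rule sum_comp_square[OF two_neq_zero])
  also have "\<dots> = (\<Sum>y\<in>UNIV. \<psi> (a * y)) + (\<Sum>y\<in>UNIV. quad_char y * \<psi> (a * y))"
    by (simp add: distrib_right sum.distrib)
  finally show ?thesis
    using assms by (simp add: sum_psi_mult sum_quad_char_psi_mult)
qed

lemma sum_psi_quadratic:
  assumes "a \<noteq> 0"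
  shows "(\<Sum>b\<in>UNIV. \<psi> (a * b ^ 2 + c * b)) = quad_char a * gauss_sum * \<psi> (- (c ^ 2 / (4 * a)))"
proof -
  define d where "d = c / (2 * a)"
  define e where "e = c ^ 2 / (4 * a)"
  have "(4::'a) = 2 * 2"
    by simp
  then have "(4::'a) \<noteq> 0"
    using two_neq_zero by (metis mult_eq_0_iff)
  then have "4 * a * e = c ^ 2" "2 * a * d = c"
    using assms two_neq_zero by (simp_all add: d_def e_def)
  have "4 * a * (a * d ^ 2) = (2 * a * d) ^ 2"
    by (simp add: power2_eq_square algebra_simps)
  then have "4 * a * (a * d ^ 2) = 4 * a * e"
    using \<open>4 * a * e = c ^ 2\<close> \<open>2 * a * d = c\<close> by simp
  then have "a * d ^ 2 = e"
    using \<open>4 \<noteq> 0\<close> assms by simp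
  then have complete_square: "a * b ^ 2 + c * b = a * (b + d) ^ 2 + - e" for b
    using \<open>2 * a * d = c\<close> by (simp add: power2_eq_square algebra_simps)
  have "(\<Sum>b\<in>UNIV. \<psi> (a * b ^ 2 + c * b)) = (\<Sum>b\<in>UNIV. \<psi> (a * (b + d) ^ 2)) * \<psi> (- e)"
    by (simp only: complete_square psi_add sum_distrib_right)
  also have "(\<Sum>b\<in>UNIV. \<psi> (a * (b + d) ^ 2)) = (\<Sum>b\<in>UNIV. \<psi> (a * b ^ 2))"
    by (rule sum.reindex_bij_witness[of _ "\<lambda>b. b - d" "\<lambda>b. b + d"]) auto
  finally show ?thesis
    using sum_psi_mult_square[OF assms] by (simp add: e_def)
qed

lemma gauss_sum_times_cnj: "gauss_sum * cnj gauss_sum = of_nat CARD('a)"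
proof -
  have G: "gauss_sum = (\<Sum>b\<in>UNIV. \<psi> (b ^ 2))"
    using sum_psi_mult_square[of 1] by simp
  have "gauss_sum * cnj gauss_sum = (\<Sum>b\<in>UNIV. \<Sum>c\<in>UNIV. \<psi> (b ^ 2 - c ^ 2))"
    by (simp add: G sum_product cnj_sum psi_diff)
  also have "\<dots> = (\<Sum>b\<in>UNIV. \<Sum>t\<in>UNIV. \<psi> ((- 2 * t) * b) * \<psi> (- (t ^ 2)))"
  proof (rule sum.cong[OF refl])
    fix b :: 'a
    show "(\<Sum>c\<in>UNIV. \<psi> (b ^ 2 - c ^ 2)) = (\<Sum>t\<in>UNIV. \<psi> ((- 2 * t) * b) * \<psi> (- (t ^ 2)))"
      by (rule sum.reindex_bij_witness[of _ "\<lambda>t. b + t" "\<lambda>c. c - b"])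
        (simp_all add: psi_add[symmetric] power2_eq_square algebra_simps)
  qed
  also have "\<dots> = (\<Sum>t\<in>UNIV. \<psi> (- (t ^ 2)) * (\<Sum>b\<in>UNIV. \<psi> ((- 2 * t) * b)))"
    by (subst sum.swap) (simp add: sum_distrib_left mult.commute)
  also have "\<dots> = (\<Sum>t::'a\<in>UNIV. if t = 0 then of_nat CARD('a) else 0)"
  proof (rule sum.cong)
    fix t :: 'a
    have "- 2 * t = 0 \<longleftrightarrow> t = 0"
      using two_neq_zero by simp
    then show "\<psi> (- (t ^ 2)) * (\<Sum>b\<in>UNIV. \<psi> ((- 2 * t) * b)) = (if t = 0 then of_nat CARD('a) else 0)"
      unfolding sum_psi_mult by simp
  qed simp
  finally show ?thesis
    by simp
qed

lemma cnj_gauss_sum: "cnj gauss_sum = quad_char (-1::'a) * gauss_sum"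
proof -
  have "cnj gauss_sum = (\<Sum>x\<in>UNIV. quad_char x * \<psi> ((-1) * x))"
    by (simp add: gauss_sum_def cnj_sum psi_minus)
  then show ?thesis
    using sum_quad_char_psi_mult[of "-1"] by simp
qed

lemma gauss_sum_square: "gauss_sum ^ 2 = quad_char (-1::'a) * of_nat CARD('a)"
proof -
  have "quad_char (-1::'a) * quad_char (-1::'a) = 1"
    by (rule quad_char_times_self) simp
  then show ?thesis
    using gauss_sum_times_cnj cnj_gauss_sum
    by (metis mult.assoc mult.left_commute mult_1 power2_eq_square)
qed

lemma quad_char_times_gauss_sum_square: "quad_char (-1::'a) * gauss_sum ^ 2 = of_nat CARD('a)"
proof -
  have "quad_char (-1::'a) * quad_char (-1::'a) = 1"
    by (rule quad_char_times_self) simp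
  then show ?thesis
    by (simp add: gauss_sum_square mult.assoc[symmetric])
qed

lemma norm_gauss_sum: "norm gauss_sum = sqrt (real CARD('a))"
proof -
  have "complex_of_real (norm gauss_sum ^ 2) = of_nat CARD('a)"
    using gauss_sum_times_cnj by (simp only: complex_norm_square)
  then have "norm gauss_sum ^ 2 = real CARD('a)"
    by (metis of_real_eq_iff of_real_of_nat_eq)
  then show ?thesis
    by (simp add: real_sqrt_unique)
qed

lemma gauss_sum_nonzero: "gauss_sum \<noteq> 0"
  using gauss_sum_times_cnj by auto

lemma quad_char_eq_sum_psi: "quad_char z = (\<Sum>w\<in>UNIV. quad_char w * \<psi> (w * z)) / gauss_sum"
  using sum_quad_char_psi_mult[of z] gauss_sum_nonzero by (simp add: mult.commute)

lemma sum_quad_char_square_minus_one_psi: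
  "(\<Sum>u\<in>UNIV. quad_char (u ^ 2 - 1) * \<psi> (c * u)) = kloosterman (-1) (- (c ^ 2 / 4))"
proof -
  \<comment> \<open>expand \<open>quad_char\<close> in additive characters; the inner sums are quadratic Gauss sums\<close>
  have "(\<Sum>u\<in>UNIV. quad_char (u ^ 2 - 1) * \<psi> (c * u))
      = (\<Sum>u\<in>UNIV. \<Sum>w\<in>UNIV. quad_char w * \<psi> (w * (u ^ 2 - 1)) * \<psi> (c * u)) / gauss_sum"
    by (subst quad_char_eq_sum_psi) (simp add: sum_divide_distrib sum_distrib_right)
  also have "\<dots> = (\<Sum>w\<in>UNIV. quad_char w * \<psi> (- w) * (\<Sum>u\<in>UNIV. \<psi> (w * u ^ 2 + c * u)))
                     / gauss_sum"
    by (subst sum.swap) (simp add: sum_distrib_left psi_add[symmetric] algebra_simps)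
  also have "\<dots> = (\<Sum>w\<in>-{0}. gauss_sum * \<psi> (- 1 * w + - (c ^ 2 / 4) / w)) / gauss_sum"
  proof -
    have "quad_char w * \<psi> (- w) * (\<Sum>u\<in>UNIV. \<psi> (w * u ^ 2 + c * u))
        = gauss_sum * \<psi> (- 1 * w + - (c ^ 2 / 4) / w)" if "w \<noteq> 0" for w
    proof -
      have "\<psi> (- 1 * w + - (c ^ 2 / 4) / w) = \<psi> (- w) * \<psi> (- (c ^ 2 / (4 * w)))"
        by (simp add: psi_add[symmetric])
      moreover have "quad_char w * \<psi> (- w) * (quad_char w * gauss_sum * \<psi> (- (c ^ 2 / (4 * w))))
          = (quad_char w * quad_char w) * (gauss_sum * (\<psi> (- w) * \<psi> (- (c ^ 2 / (4 * w)))))"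
        by (simp only: mult_ac)
      ultimately show ?thesis
        using quad_char_times_self[OF that] by (simp add: sum_psi_quadratic[OF that])
    qed
    then show ?thesis
      using sum.remove[of UNIV 0 "\<lambda>w. quad_char w * \<psi> (- w) * (\<Sum>u\<in>UNIV. \<psi> (w * u ^ 2 + c * u))"]
      by (simp add: Compl_eq_Diff_UNIV quad_char_def)
  qed
  finally show ?thesis
    using gauss_sum_nonzero by (simp add: kloosterman_def sum_distrib_left[symmetric])
qed

end

section \<open>Fields of characteristic three\<close>

definition omega :: complex where
  "omega = Complex (-1 / 2) (sqrt 3 / 2)"

lemma omega_times_omega: "omega * omega = cnj omega"
  and omega_times_cnj: "omega * cnj omega = 1"
  and cnj_times_omega: "cnj omega * omega = 1"
  and cnj_times_cnj_omega: "cnj omega * cnj omega = omega"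
  and omega_add_cnj: "omega + cnj omega = -1"
  and omega_minus_cnj: "omega - cnj omega = Complex 0 (sqrt 3)"
  and omega_neq_1: "omega \<noteq> 1"
  and cnj_omega_neq_1: "cnj omega \<noteq> 1"
  by (simp_all add: omega_def complex_eq_iff cmod_def power2_eq_square)

(* the character of the prime field {0, 1, -1}; its value at any other argument is junk *)
definition char_F3 :: "'a::field \<Rightarrow> complex" where
  "char_F3 t = (if t = 0 then 1 else if t = 1 then omega else cnj omega)"

definition trace_char :: "nat \<Rightarrow> 'a::field \<Rightarrow> complex" where
  "trace_char m x = char_F3 (abs_trace3 m x)"

locale char3_field =
  fixes m :: nat
  assumes card_UNIV_eq: "CARD('a::{finite,field}) = 3 ^ m"
begin

lemma three_eq_0: "(3::'a) = 0"
proof -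
  have "(3::'a) ^ m = 0"
    using of_nat_card_UNIV_eq_0[where 'a='a] by (simp add: card_UNIV_eq)
  then show ?thesis
    by simp
qed

lemma m_pos: "m > 0"
  using card_mono[of UNIV "{0::'a, 1}"] card_UNIV_eq by (cases m) auto

lemma two_eq_minus_one: "(2::'a) = -1"
  using three_eq_0 by (simp add: eq_neg_iff_add_eq_0)

lemma four_eq_1: "(4::'a) = 1"
proof -
  have "(4::'a) = 3 + 1"
    by simp
  then show ?thesis
    by (simp only: three_eq_0) simp
qed

lemma one_neq_minus_one: "(1::'a) \<noteq> -1"
  by (simp only: eq_neg_iff_add_eq_0 one_add_one two_eq_minus_one) simp

lemma cube_add: "(x + y) ^ 3 = x ^ 3 + (y::'a) ^ 3"
proof -
  have "(x + y) ^ 3 = x ^ 3 + y ^ 3 + 3 * (x ^ 2 * y + x * y ^ 2)"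
    by (simp add: power3_eq_cube power2_eq_square algebra_simps)
  then show ?thesis
    by (simp add: three_eq_0)
qed

lemma cube_sum: "(\<Sum>k\<in>A. f k) ^ 3 = (\<Sum>k\<in>A. (f k :: 'a) ^ 3)"
  by (induction A rule: infinite_finite_induct) (simp_all add: cube_add)

lemma power_three_power_add: "(x + y) ^ 3 ^ k = x ^ 3 ^ k + (y::'a) ^ 3 ^ k"
  by (induction k arbitrary: x y) (simp_all add: power_mult cube_add)

lemma cube_eq_self_iff: "(t::'a) ^ 3 = t \<longleftrightarrow> t = 0 \<or> t = 1 \<or> t = -1"
proof -
  have "t ^ 3 - t = t * (t - 1) * (t + 1)"
    by (simp add: power3_eq_cube algebra_simps)
  then have "t ^ 3 = t \<longleftrightarrow> t * (t - 1) * (t + 1) = 0"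
    by (metis eq_iff_diff_eq_0)
  then show ?thesis
    by (auto simp: eq_neg_iff_add_eq_0)
qed

lemma trace_add: "abs_trace3 m (x + y) = abs_trace3 m x + abs_trace3 m (y::'a)"
  by (simp add: abs_trace3_def power_three_power_add sum.distrib)

lemma trace_minus: "abs_trace3 m (- x) = - abs_trace3 m (x::'a)"
  by (simp add: abs_trace3_def power_minus_odd sum_negf)

lemma trace_0: "abs_trace3 m (0::'a) = 0"
  by (simp add: abs_trace3_def power_0_left)

lemma trace_1: "abs_trace3 m (1::'a) = of_nat m"
  by (simp add: abs_trace3_def)

lemma trace_cube: "abs_trace3 m ((x::'a) ^ 3) = abs_trace3 m x"
proof -
  have "(\<Sum>k<Suc m. x ^ 3 ^ k) = x + abs_trace3 m (x ^ 3)"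
    by (subst sum.lessThan_Suc_shift) (simp add: abs_trace3_def power_mult[symmetric] mult.commute)
  moreover have "(\<Sum>k<Suc m. x ^ 3 ^ k) = abs_trace3 m x + x"
    using power_card_UNIV[of x] by (simp add: abs_trace3_def card_UNIV_eq)
  ultimately show ?thesis
    by simp
qed

lemma trace_cases: "abs_trace3 m (x::'a) = 0 \<or> abs_trace3 m x = 1 \<or> abs_trace3 m x = -1"
proof -
  have "abs_trace3 m x ^ 3 = abs_trace3 m (x ^ 3)"
    by (simp add: abs_trace3_def cube_sum flip: power_mult) (simp add: mult.commute)
  then show ?thesis
    using cube_eq_self_iff trace_cube by simp
qed

lemma trace_nonzero_exists: "\<exists>x::'a. abs_trace3 m x \<noteq> 0"
proof (rule ccontr)
  assume trace_vanishes: "\<not> ?thesis"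
  define p :: "'a poly" where "p = (\<Sum>k<m. monom 1 (3 ^ k))"
  have "coeff p 1 = (\<Sum>k<m. if k = 0 then 1 else 0)"
    by (auto simp: p_def coeff_sum coeff_monom intro!: sum.cong)
  then have "coeff p 1 = 1"
    using m_pos by (simp add: sum.delta')
  then have "p \<noteq> 0"
    by (metis coeff_0 zero_neq_one)
  moreover have "{x. poly p x = 0} = UNIV"
    using trace_vanishes by (auto simp: p_def poly_sum poly_monom abs_trace3_def)
  ultimately have "CARD('a) \<le> degree p"
    using card_poly_roots_bound by fastforce
  also have "degree p \<le> 3 ^ (m - 1)"
    unfolding p_def
    by (rule degree_sum_le) (auto intro!: order.trans[OF degree_monom_le] power_increasing)
  also have "\<dots> < 3 ^ m"
    using m_pos by simp
  finally show False
    by (simp add: card_UNIV_eq)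
qed

lemma char_F3_add:
  assumes "s \<in> {0, 1, -1}" "t \<in> {0, 1, -1::'a}"
  shows "char_F3 (s + t) = char_F3 s * char_F3 t"
  using assms one_neq_minus_one
  by (elim insertE emptyE)
    (simp_all add: char_F3_def two_eq_minus_one omega_times_omega omega_times_cnj cnj_times_omega
      cnj_times_cnj_omega)

lemma trace_char_add: "trace_char m (x + y) = trace_char m x * trace_char m (y::'a)"
  using trace_cases[of x] trace_cases[of y] by (auto simp: trace_char_def trace_add char_F3_add)

lemma trace_char_0: "trace_char m (0::'a) = 1"
  by (simp add: trace_char_def trace_0 char_F3_def)

lemma trace_char_nontrivial: "\<exists>x::'a. trace_char m x \<noteq> 1"
proof -
  obtain x :: 'a where "abs_trace3 m x \<noteq> 0"
    using trace_nonzero_exists by blast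
  then show ?thesis
    using trace_cases[of x] omega_neq_1 cnj_omega_neq_1 by (auto simp: trace_char_def char_F3_def)
qed

end

sublocale char3_field \<subseteq> odd_additive_character "trace_char m :: 'a \<Rightarrow> complex"
proof
  show "trace_char m (x + y) = trace_char m x * trace_char m y" for x y :: 'a
    by (rule trace_char_add)
  show "trace_char m (0::'a) = 1"
    by (rule trace_char_0)
  show "\<exists>x::'a. trace_char m x \<noteq> 1"
    by (rule trace_char_nontrivial)
  show "(2::'a) \<noteq> 0"
    by (simp only: two_eq_minus_one) simp
qed

context char3_field
begin

abbreviation psi3 :: "'a \<Rightarrow> complex" (\<open>\<psi>\<close>) where
  "\<psi> \<equiv> trace_char m"

definition cube_root :: "'a \<Rightarrow> 'a" where
  "cube_root a = a ^ 3 ^ (m - 1)"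

lemma cube_root_cube: "cube_root a ^ 3 = a"
  and cube_root_of_cube: "cube_root (a ^ 3) = a"
proof -
  have "3 ^ (m - 1) * 3 = CARD('a)" "3 * 3 ^ (m - 1) = CARD('a)"
    using m_pos by (simp_all add: card_UNIV_eq flip: power_Suc power_Suc2)
  then show "cube_root a ^ 3 = a" "cube_root (a ^ 3) = a"
    by (simp_all only: cube_root_def power_mult[symmetric] power_card_UNIV)
qed

lemma cube_root_eq_0_iff: "cube_root a = 0 \<longleftrightarrow> a = 0"
  by (simp add: cube_root_def)

lemma cube_root_inverse: "cube_root (inverse a) = inverse (cube_root a)"
  by (simp add: cube_root_def power_inverse)

lemma cube_root_eq_self_iff: "cube_root a = a \<longleftrightarrow> a ^ 3 = a"
proof
  assume "cube_root a = a"
  then show "a ^ 3 = a"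
    using cube_root_cube[of a] by simp
next
  assume "a ^ 3 = a"
  then show "cube_root a = a"
    using cube_root_of_cube[of a] by simp
qed

lemma psi_cube: "\<psi> (x ^ 3) = \<psi> x"
  by (simp add: trace_char_def trace_cube)

lemma psi_artin_schreier: "\<psi> (a * (x ^ 3 - x)) = \<psi> ((cube_root a - a) * x)"
proof -
  have "a * x ^ 3 = (cube_root a * x) ^ 3"
    by (simp add: power_mult_distrib cube_root_cube)
  then show ?thesis
    by (simp add: right_diff_distrib left_diff_distrib psi_diff psi_cube)
qed

lemma sum_psi_artin_schreier:
  "(\<Sum>x\<in>UNIV. \<psi> (a * (x ^ 3 - x))) = (if a ^ 3 = a then of_nat CARD('a) else 0)"
  by (simp add: psi_artin_schreier sum_psi_mult cube_root_eq_self_iff)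

lemma sum_quad_char_psi_artin_schreier:
  "(\<Sum>x\<in>UNIV. quad_char x * \<psi> (a * (x ^ 3 - x))) = quad_char (cube_root a - a) * gauss_sum"
  by (simp add: psi_artin_schreier sum_quad_char_psi_mult)

lemma sum_psi_quadratic_char3:
  assumes "a \<noteq> 0"
  shows "(\<Sum>b\<in>UNIV. \<psi> (- a * b ^ 2 + c * b)) = quad_char (- a) * gauss_sum * \<psi> (c ^ 2 / a)"
  using sum_psi_quadratic[of "- a" c] assms by (simp add: four_eq_1)

section \<open>Counting the solutions of \<open>x\<^sup>3 - x = b\<^sup>2\<close>\<close>

lemma sum_trace_restrict:
  assumes "i \<in> {0, 1, -1}"
  shows "3 * (\<Sum>b\<in>UNIV. if abs_trace3 m b = i then f (b ^ 2) else 0)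
    = (\<Sum>b\<in>UNIV. f (b ^ 2)) + (if i = 0 then 2 else -1) * (\<Sum>b\<in>UNIV. f (b ^ 2) * \<psi> b)"
proof -
  define N where "N t = (\<Sum>b\<in>UNIV. if abs_trace3 m b = t then f (b ^ 2) else 0)" for t
  \<comment> \<open>\<open>b \<mapsto> - b\<close> swaps the traces \<open>1\<close> and \<open>-1\<close> and fixes \<open>b\<^sup>2\<close>\<close>
  have symmetric: "N (-1) = N 1"
    unfolding N_def
    by (rule sum.reindex_bij_witness[of _ uminus uminus]) (auto simp: trace_minus minus_equation_iff)
  have "(\<Sum>b\<in>UNIV. f (b ^ 2)) = N 0 + N 1 + N (-1)"
    unfolding N_def sum.distrib[symmetric]
    by (rule sum.cong) (use trace_cases one_neq_minus_one in auto)
  then have plain: "(\<Sum>b\<in>UNIV. f (b ^ 2)) = N 0 + 2 * N 1"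
    by (simp add: symmetric)
  have "(\<Sum>b\<in>UNIV. f (b ^ 2) * \<psi> b) = N 0 + (omega * N 1 + cnj omega * N (-1))"
    unfolding N_def sum_distrib_left sum.distrib[symmetric]
    by (rule sum.cong) (use trace_cases one_neq_minus_one in \<open>auto simp: trace_char_def char_F3_def\<close>)
  also have "omega * N 1 + cnj omega * N (-1) = - N 1"
    using omega_add_cnj by (simp add: symmetric flip: distrib_right)
  finally have twisted: "(\<Sum>b\<in>UNIV. f (b ^ 2) * \<psi> b) = N 0 - N 1"
    by simp
  from assms consider "i = 0" | "i = 1" | "i = -1"
    by blast
  then show ?thesis
    by cases (simp_all add: N_def[symmetric] plain twisted symmetric one_neq_minus_one)
qed

definition solution_sum :: "'a \<Rightarrow> ('a \<Rightarrow> complex) \<Rightarrow> complex" where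
  "solution_sum i g
     = (\<Sum>x\<in>UNIV. \<Sum>b\<in>UNIV. if x ^ 3 - x = b ^ 2 \<and> abs_trace3 m b = i then g x else 0)"

definition twisted_sum :: "'a \<Rightarrow> ('a \<Rightarrow> complex) \<Rightarrow> complex" where
  "twisted_sum c g = (\<Sum>x\<in>UNIV. \<Sum>b\<in>UNIV. if x ^ 3 - x = b ^ 2 then g x * \<psi> (c * b) else 0)"

lemma solution_sum_eq_twisted_sums:
  assumes "i \<in> {0, 1, -1}"
  shows "3 * solution_sum i g = twisted_sum 0 g + (if i = 0 then 2 else -1) * twisted_sum 1 g"
proof -
  define F where "F y = (\<Sum>x\<in>UNIV. if x ^ 3 - x = y then g x else 0)" for y
  have "solution_sum i g = (\<Sum>b\<in>UNIV. if abs_trace3 m b = i then F (b ^ 2) else 0)"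
    unfolding solution_sum_def F_def by (subst sum.swap) (auto intro!: sum.cong)
  moreover have "twisted_sum c g = (\<Sum>b\<in>UNIV. F (b ^ 2) * \<psi> (c * b))" for c
    unfolding twisted_sum_def F_def sum_distrib_right by (subst sum.swap) (auto intro!: sum.cong)
  ultimately show ?thesis
    using sum_trace_restrict[OF assms, of F] by simp
qed

lemma twisted_sum_eq:
  "twisted_sum c g
     = (\<Sum>a\<in>UNIV. (\<Sum>x\<in>UNIV. g x * \<psi> (a * (x ^ 3 - x))) * (\<Sum>b\<in>UNIV. \<psi> (- a * b ^ 2 + c * b)))
         / of_nat CARD('a)"
  unfolding twisted_sum_def sum_fiber_eq_fourier
  by (simp add: psi_add[symmetric] add.commute)

lemma twisted_sum_const:
  "twisted_sum c (\<lambda>_. 1) = (if c = 0 then of_nat CARD('a) else 0)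
      + gauss_sum * (quad_char (-1::'a) * \<psi> (c ^ 2) + \<psi> (- (c ^ 2)))"
proof -
  define Q where "Q a = (\<Sum>b\<in>UNIV. \<psi> (- a * b ^ 2 + c * b))" for a
  have "twisted_sum c (\<lambda>_. 1) = (\<Sum>a\<in>UNIV. if a ^ 3 = a then Q a else 0)"
    unfolding twisted_sum_eq sum_divide_distrib
    by (intro sum.cong refl) (simp add: sum_psi_artin_schreier Q_def)
  also have "\<dots> = (\<Sum>a\<in>{0, 1, -1}. Q a)"
  proof -
    have "{a::'a. a ^ 3 = a} = {0, 1, -1}"
      using cube_eq_self_iff by auto
    then show ?thesis
      by (simp add: sum.If_cases)
  qed
  also have "\<dots> = Q 0 + Q 1 + Q (-1)"
    using one_neq_minus_one by simp
  also have "Q 0 = (if c = 0 then of_nat CARD('a) else 0)"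
    using sum_psi_mult[of c] by (simp add: Q_def)
  also have "Q 1 = quad_char (-1::'a) * gauss_sum * \<psi> (c ^ 2)"
    using sum_psi_quadratic_char3[of 1 c] by (simp add: Q_def)
  also have "Q (-1) = gauss_sum * \<psi> (- (c ^ 2))"
    using sum_psi_quadratic_char3[of "-1" c] by (simp add: Q_def)
  finally show ?thesis
    by (simp add: algebra_simps)
qed

lemma sum_quad_char_artin_schreier_dual:
  assumes "d ^ 3 = d"
  shows "(\<Sum>a\<in>-{0}. quad_char (a * (cube_root a - a)) * \<psi> (d / a))
    = (\<Sum>v\<in>-{0}. quad_char (v ^ 2 - 1) * \<psi> (d * v))"
proof (rule sym, rule sum.reindex_bij_witness[of _ "\<lambda>a. inverse (cube_root a)" "\<lambda>v. inverse (v ^ 3)"])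
  fix v :: 'a
  assume "v \<in> -{0}"
  then have "v \<noteq> 0"
    by simp
  have "cube_root (inverse (v ^ 3)) = inverse v"
    by (simp add: cube_root_inverse cube_root_of_cube)
  then have "inverse (v ^ 3) * (cube_root (inverse (v ^ 3)) - inverse (v ^ 3))
      = (inverse (v ^ 3)) ^ 2 * (v ^ 2 - 1)"
    using \<open>v \<noteq> 0\<close> by (simp add: field_simps power2_eq_square power3_eq_cube)
  then show "quad_char (inverse (v ^ 3) * (cube_root (inverse (v ^ 3)) - inverse (v ^ 3)))
      * \<psi> (d / inverse (v ^ 3)) = quad_char (v ^ 2 - 1) * \<psi> (d * v)"
    using \<open>v \<noteq> 0\<close> psi_cube[of "d * v"] assms
    by (simp add: quad_char_square_mult[OF two_neq_zero] power_mult_distrib divide_inverse)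
qed (auto simp: power_inverse cube_root_inverse cube_root_cube cube_root_of_cube cube_root_eq_0_iff)

lemma twisted_sum_quad_char_summand:
  assumes "a \<noteq> 0"
  shows "quad_char (cube_root a - a) * gauss_sum * (\<Sum>b\<in>UNIV. \<psi> (- a * b ^ 2 + c * b))
    = of_nat CARD('a) * (quad_char (a * (cube_root a - a)) * \<psi> (c ^ 2 / a))"
proof -
  have "quad_char (- a) = quad_char (-1::'a) * quad_char a"
    using quad_char_mult[OF two_neq_zero, of "-1" a] by simp
  then show ?thesis
    unfolding sum_psi_quadratic_char3[OF assms]
    using quad_char_times_gauss_sum_square
    by (simp add: quad_char_mult[OF two_neq_zero] power2_eq_square mult_ac)
qed

lemma twisted_sum_quad_char:
  assumes "c ^ 3 = c"
  shows "twisted_sum c quad_char = kloosterman (-1) (- (c ^ 2)) - quad_char (-1::'a)"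
proof -
  let ?q = "of_nat CARD('a) :: complex"
  have "twisted_sum c quad_char
      = (\<Sum>a\<in>-{0}. ?q * (quad_char (a * (cube_root a - a)) * \<psi> (c ^ 2 / a))) / ?q"
    unfolding twisted_sum_eq sum_quad_char_psi_artin_schreier
    using sum.remove[of UNIV 0 "\<lambda>a. quad_char (cube_root a - a) * gauss_sum
        * (\<Sum>b\<in>UNIV. \<psi> (- a * b ^ 2 + c * b))"] twisted_sum_quad_char_summand
    by (simp add: Compl_eq_Diff_UNIV cube_root_eq_0_iff quad_char_def)
  also have "\<dots> = (\<Sum>v\<in>-{0}. quad_char (v ^ 2 - 1) * \<psi> (c ^ 2 * v))"
  proof -
    have "(c ^ 2) ^ 3 = (c ^ 3) ^ 2"
      by (simp flip: power_mult add: mult.commute)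
    then have "(c ^ 2) ^ 3 = c ^ 2"
      using assms by simp
    then show ?thesis
      by (simp add: sum_distrib_left[symmetric] sum_quad_char_artin_schreier_dual)
  qed
  also have "\<dots> = (\<Sum>v\<in>UNIV. quad_char (v ^ 2 - 1) * \<psi> (c ^ 2 * v)) - quad_char (-1::'a)"
    using sum.remove[of UNIV 0 "\<lambda>v. quad_char (v ^ 2 - 1) * \<psi> (c ^ 2 * v)"]
    by (simp add: Compl_eq_Diff_UNIV)
  also have "(\<Sum>v\<in>UNIV. quad_char (v ^ 2 - 1) * \<psi> (c ^ 2 * v)) = kloosterman (-1) (- (c ^ 2))"
  proof -
    have "(c ^ 2) ^ 2 = c ^ 3 * c"
      by (simp add: power2_eq_square power3_eq_cube)
    then have "(c ^ 2) ^ 2 = c ^ 2"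
      using assms by (simp add: power2_eq_square)
    then show ?thesis
      by (simp add: sum_quad_char_square_minus_one_psi four_eq_1)
  qed
  finally show ?thesis .
qed

definition gauss_sum_coeff :: "'a \<Rightarrow> complex" where
  "gauss_sum_coeff i = quad_char (-1::'a) + 1
     + (if i = 0 then 2 else -1) * (quad_char (-1::'a) * \<psi> 1 + \<psi> (-1))"

lemma solution_sums_identity:
  assumes "i \<in> {0, 1, -1}"
  shows "3 * (solution_sum i (\<lambda>_. 1) - solution_sum i quad_char)
    = of_nat CARD('a) + gauss_sum * gauss_sum_coeff i + (1 + quad_char (-1::'a))
      - (if i = 0 then 2 else -1) * (kloosterman (-1) (-1) - quad_char (-1::'a))"
  using solution_sum_eq_twisted_sums[OF assms, of "\<lambda>_. 1"] solution_sum_eq_twisted_sums[OF assms, of quad_char]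
    twisted_sum_const[of 0] twisted_sum_const[of 1] twisted_sum_quad_char[of 0] twisted_sum_quad_char[of 1]
  by (simp add: gauss_sum_coeff_def kloosterman_zero_right algebra_simps)

lemma norm_gauss_sum_coeff_le: "norm (gauss_sum_coeff i) \<le> 6"
proof -
  have "norm (quad_char (-1::'a) + 1) \<le> 2"
    using norm_triangle_ineq[of "quad_char (-1::'a)" 1] norm_quad_char_le[of "-1::'a"] by simp
  moreover have "norm (quad_char (-1::'a) * \<psi> 1 + \<psi> (-1)) \<le> 2"
    using norm_triangle_ineq[of "quad_char (-1::'a) * \<psi> 1" "\<psi> (-1)"] norm_quad_char_le[of "-1::'a"]
    by (simp add: norm_mult)
  moreover have "norm (if i = 0 then 2 else -1 :: complex) \<le> 2"
    by simp
  ultimately have "norm (gauss_sum_coeff i) \<le> 2 + 2 * 2"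
    unfolding gauss_sum_coeff_def
    by (meson add_mono mult_mono norm_ge_zero norm_mult_ineq norm_triangle_le order.trans)
  then show ?thesis
    by simp
qed

lemma norm_kloosterman_minus_one_bound: "norm (kloosterman (-1) (-1)) ^ 4 \<le> 2 * real CARD('a) ^ 3"
  using kloosterman_eq_kloosterman_1[of "-1" "-1"] norm_kloosterman_bound[of 1] by simp

lemma gauss_sum_coeff_m4:
  assumes "m = 4"
  shows "gauss_sum_coeff i = (if i = 0 then 0 else 3)"
proof -
  have "4 dvd CARD('a) - 1"
    using assms by (simp add: card_UNIV_eq)
  then have "quad_char (-1::'a) = 1"
    using minus_one_is_square[OF two_neq_zero] by (auto simp: quad_char_def)
  moreover have "\<psi> 1 = omega"
    unfolding trace_char_def trace_1 using assms four_eq_1 by (simp add: char_F3_def)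
  ultimately show ?thesis
    using omega_add_cnj by (simp add: gauss_sum_coeff_def psi_minus algebra_simps)
qed

lemma norm_gauss_sum_coeff_m5:
  assumes "m = 5"
  shows "norm (gauss_sum_coeff 0) ^ 2 \<le> 12"
proof -
  have "(of_nat m :: 'a) = 2 + 3"
    using assms by simp
  then have "\<psi> 1 = cnj omega"
    unfolding trace_char_def trace_1
    using two_eq_minus_one three_eq_0 one_neq_minus_one by (simp add: char_F3_def)
  then have coeff: "gauss_sum_coeff 0 = quad_char (-1::'a) + 1 + 2 * (quad_char (-1::'a) * cnj omega + omega)"
    by (simp add: gauss_sum_coeff_def psi_minus)
  have "quad_char (-1::'a) = 1 \<or> quad_char (-1::'a) = -1"
    by (simp add: quad_char_def)
  then show ?thesis
  proof
    assume "quad_char (-1::'a) = 1"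
    then show ?thesis
      using omega_add_cnj by (simp add: coeff algebra_simps)
  next
    assume "quad_char (-1::'a) = -1"
    then have "gauss_sum_coeff 0 = 2 * (omega - cnj omega)"
      by (simp add: coeff algebra_simps)
    then show ?thesis
      by (simp add: omega_minus_cnj norm_mult cmod_def)
  qed
qed

lemma solution_sums_difference_no_witness:
  assumes "\<not> (\<exists>x\<in>nonsquares. \<exists>b. b \<noteq> 0 \<and> x ^ 3 - x = b ^ 2 \<and> abs_trace3 m b = i)"
  shows "solution_sum i (\<lambda>_. 1) - solution_sum i quad_char = (if i = 0 then 2 - quad_char (-1::'a) else 0)"
proof -
  \<comment> \<open>without a witness only the solutions with \<open>b = 0\<close>, i.e. \<open>x \<in> {0, 1, -1}\<close>, have \<open>quad_char x \<noteq> 1\<close>\<close>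
  have "(\<Sum>b\<in>UNIV. if x ^ 3 - x = b ^ 2 \<and> abs_trace3 m b = i then 1 - quad_char x else 0)
      = (if x ^ 3 = x \<and> i = 0 then 1 - quad_char x else 0)" for x :: 'a
  proof -
    have "(if x ^ 3 - x = b ^ 2 \<and> abs_trace3 m b = i then 1 - quad_char x else 0) = 0" if "b \<noteq> 0" for b
      using assms that quad_char_eq_minus_one_iff[of x] by (auto simp: quad_char_def)
    then show ?thesis
      using sum.remove[of UNIV 0 "\<lambda>b. if x ^ 3 - x = b ^ 2 \<and> abs_trace3 m b = i then 1 - quad_char x else 0"]
      by (simp add: Compl_eq_Diff_UNIV trace_0 eq_commute[of 0 i])
  qed
  then have "solution_sum i (\<lambda>_. 1) - solution_sum i quad_char
      = (\<Sum>x::'a\<in>UNIV. if x ^ 3 = x \<and> i = 0 then 1 - quad_char x else 0)"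
    by (simp add: solution_sum_def sum_subtractf[symmetric] if_distrib[of "\<lambda>t. t - _"] cong: if_cong)
  also have "\<dots> = (if i = 0 then (\<Sum>x\<in>{0, 1, -1::'a}. 1 - quad_char x) else 0)"
  proof -
    have "{x::'a. x ^ 3 = x} = {0, 1, -1}"
      using cube_eq_self_iff by auto
    then show ?thesis
      by (simp add: sum.If_cases)
  qed
  finally show ?thesis
    using one_neq_minus_one by simp
qed

(* the constant 11 = 9 + 2 absorbs the solutions with b = 0 and the term 1 + quad_char (-1) *)
definition error_bound :: "'a \<Rightarrow> real" where
  "error_bound i = norm gauss_sum * norm (gauss_sum_coeff i)
     + (if i = 0 then 2 else 1) * (norm (kloosterman (-1) (-1)) + 1) + 11"

lemma card_le_error_bound:
  assumes "i \<in> {0, 1, -1}"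
    and no_witness: "\<not> (\<exists>x\<in>nonsquares. \<exists>b. b \<noteq> 0 \<and> x ^ 3 - x = b ^ 2 \<and> abs_trace3 m b = i)"
  shows "real CARD('a) \<le> error_bound i"
proof -
  let ?\<chi> = "quad_char (-1::'a)"
  let ?c = "if i = 0 then 2 else -1 :: complex"
  let ?K = "kloosterman (-1) (-1)"
  let ?A = "3 * (if i = 0 then 2 - ?\<chi> else 0)"
  let ?B = "gauss_sum * gauss_sum_coeff i"
  let ?C = "1 + ?\<chi>"
  let ?D = "?c * (?K - ?\<chi>)"
  have "of_nat CARD('a) = ?A - ?B - ?C + ?D"
    using solution_sums_identity[OF assms(1)] solution_sums_difference_no_witness[OF no_witness]
    by (simp add: algebra_simps)
  then have "real CARD('a) = norm (?A - ?B - ?C + ?D)"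
    by (metis norm_of_nat)
  moreover have "norm (?A - ?B - ?C + ?D) \<le> norm (?A - ?B - ?C) + norm ?D"
    by (rule norm_triangle_ineq)
  moreover have "norm (?A - ?B - ?C) \<le> norm (?A - ?B) + norm ?C"
    by (rule norm_triangle_ineq4)
  moreover have "norm (?A - ?B) \<le> norm ?A + norm ?B"
    by (rule norm_triangle_ineq4)
  moreover have "norm (2 - ?\<chi>) \<le> 3" "norm (1 + ?\<chi>) \<le> 2" "norm (?K - ?\<chi>) \<le> norm ?K + 1"
    using norm_triangle_ineq4[of 2 ?\<chi>] norm_triangle_ineq[of 1 ?\<chi>] norm_triangle_ineq4[of ?K ?\<chi>]
      norm_quad_char_le[of "-1::'a"]
    by simp_all
  then have "norm ?A + norm ?B + norm ?C + norm ?D \<le> error_bound i"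
    by (auto simp: error_bound_def norm_mult intro!: add_mono)
  ultimately show ?thesis
    by linarith
qed

lemma error_bound_m4:
  assumes "m = 4"
  shows "error_bound i < real CARD('a)"
proof -
  have q: "real CARD('a) = 81"
    using assms by (simp add: card_UNIV_eq)
  have "sqrt 81 = (9::real)"
    by (rule real_sqrt_unique) simp_all
  then have "norm gauss_sum = 9"
    by (simp add: norm_gauss_sum q)
  have "norm (kloosterman (-1) (-1)) ^ 4 < 33 ^ 4"
    using norm_kloosterman_minus_one_bound q by simp
  then have "norm (kloosterman (-1) (-1)) < 33"
    by (rule power_less_imp_less_base) simp
  with \<open>norm gauss_sum = 9\<close> show ?thesis
    unfolding error_bound_def gauss_sum_coeff_m4[OF assms] q by auto
qed

lemma error_bound_m5:
  assumes "m = 5"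
  shows "error_bound i < real CARD('a)"
proof -
  define g where "g = norm gauss_sum"
  define \<beta> where "\<beta> = norm (gauss_sum_coeff i)"
  define k where "k = norm (kloosterman (-1) (-1))"
  have q: "real CARD('a) = 243"
    using assms by (simp add: card_UNIV_eq)
  have g: "g ^ 2 = 243" "0 \<le> g"
    by (simp_all add: g_def norm_gauss_sum q)
  have "k ^ 4 < 74 ^ 4"
    using norm_kloosterman_minus_one_bound q by (simp add: k_def)
  then have "k < 74"
    by (rule power_less_imp_less_base) simp
  show ?thesis
  proof (cases "i = 0")
    case True
    have "(g * \<beta>) ^ 2 \<le> 54 ^ 2"
      using g True norm_gauss_sum_coeff_m5[OF assms] by (simp add: \<beta>_def power_mult_distrib)
    then have "g * \<beta> \<le> 54"
      by (rule power2_le_imp_le) simp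
    with True \<open>k < 74\<close> show ?thesis
      unfolding error_bound_def q g_def[symmetric] \<beta>_def[symmetric] k_def[symmetric] by simp
  next
    case False
    have "g ^ 2 \<le> 16 ^ 2"
      using g by simp
    then have "g \<le> 16"
      by (rule power2_le_imp_le) simp
    then have "g * \<beta> \<le> 16 * 6"
      using g norm_gauss_sum_coeff_le[of i] by (intro mult_mono) (simp_all add: \<beta>_def)
    with False \<open>k < 74\<close> show ?thesis
      unfolding error_bound_def q g_def[symmetric] \<beta>_def[symmetric] k_def[symmetric] by simp
  qed
qed

end

lemma large_field_estimate:
  fixes q g \<beta> \<gamma> k :: real
  assumes "729 \<le> q" "g ^ 2 = q" "0 \<le> g" "0 \<le> \<beta>" "\<beta> \<le> 6" "\<gamma> \<le> 2" "0 \<le> k"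
    and "k ^ 4 \<le> 2 * q ^ 3"
  shows "g * \<beta> + \<gamma> * (k + 1) + 11 < q"
proof -
  have "(27::real) ^ 2 \<le> g ^ 2"
    using assms(1,2) by simp
  then have "27 \<le> g"
    using assms(3) by (rule power2_le_imp_le)
  then have "27 * g \<le> g * g"
    by (rule mult_right_mono) (use assms(3) in simp)
  moreover have "g * \<beta> \<le> g * 6"
    by (rule mult_left_mono) (use assms(3,5) in simp_all)
  ultimately have gauss_part: "g * \<beta> \<le> 2 * q / 9"
    using assms(2) by (simp add: power2_eq_square)
  have "512 * q ^ 3 < q * q ^ 3"
    using assms(1) by (intro mult_strict_right_mono) simp_all
  moreover have "(q / 4) ^ 4 = q * q ^ 3 / 256"
    by (simp add: power_divide power4_eq_xxxx power3_eq_cube)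
  ultimately have "k ^ 4 < (q / 4) ^ 4"
    using assms(8) by linarith
  then have "k < q / 4"
    by (rule power_less_imp_less_base) (use assms(1) in simp)
  moreover have "\<gamma> * (k + 1) \<le> 2 * (k + 1)"
    by (rule mult_right_mono) (use assms(6,7) in simp_all)
  ultimately have "\<gamma> * (k + 1) < q / 2 + 2"
    by argo
  with gauss_part assms(1) show ?thesis
    by argo
qed

context char3_field
begin

lemma error_bound_large:
  assumes "m \<ge> 6"
  shows "error_bound i < real CARD('a)"
proof -
  have "(3::real) ^ 6 \<le> 3 ^ m"
    using assms by (intro power_increasing) simp_all
  then have "729 \<le> real CARD('a)"
    by (simp add: card_UNIV_eq)
  then show ?thesis
    unfolding error_bound_def
    using norm_gauss_sum_coeff_le[of i] norm_kloosterman_minus_one_bound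
    by (intro large_field_estimate) (simp_all add: norm_gauss_sum)
qed

theorem exists_nonsquare_solution:
  assumes "m \<ge> 4" "i \<in> {0, 1, -1::'a}"
  shows "\<exists>x\<in>nonsquares. \<exists>b. b \<noteq> 0 \<and> x ^ 3 - x = b ^ 2 \<and> abs_trace3 m b = i"
proof (rule ccontr)
  assume "\<not> ?thesis"
  then have "real CARD('a) \<le> error_bound i"
    by (rule card_le_error_bound[OF assms(2)])
  moreover consider "m = 4" | "m = 5" | "m \<ge> 6"
    using assms(1) by linarith
  then have "error_bound i < real CARD('a)"
    by cases (erule error_bound_m4 error_bound_m5 error_bound_large)+
  ultimately show False
    by simp
qed

end

theorem lemma7:
  fixes m :: nat
  assumes "card (UNIV :: 'a::{field,finite} set) = 3 ^ m" and "m \<ge> 4"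
  shows "\<forall>i\<in>{0,1,2::nat}. \<exists>x\<in>(nonsquares :: 'a set). \<exists>b::'a.
           b \<noteq> 0 \<and> x ^ 3 - x = b ^ 2 \<and> abs_trace3 m b = of_nat i"
proof
  fix i :: nat
  assume "i \<in> {0, 1, 2}"
  have field: "char3_field TYPE('a) m"
    using assms(1) by unfold_locales
  then have "(of_nat i :: 'a) \<in> {0, 1, -1}"
    using \<open>i \<in> {0, 1, 2}\<close> char3_field.two_eq_minus_one by fastforce
  then show "\<exists>x\<in>(nonsquares :: 'a set). \<exists>b. b \<noteq> 0 \<and> x ^ 3 - x = b ^ 2 \<and> abs_trace3 m b = of_nat i"
    by (rule char3_field.exists_nonsquare_solution[OF field assms(2)])
qed

end
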